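(* Every $P_2$-irreducible tree $T$ is of one of the following forms: (1) $K_1$; (2) $P_2$ (a single edge); (3) a star $K_{1,n}$ with $n\geq 3$; (4) a tree containing at least two distinct vertices each of which is adjacent to at least two leaves.
   Context: A graph has a pendant $P_2$ if it contains distinct vertices $a,b,w$ such that $a$ has degree $1$ and is adjacent to $b$, and $b$ has degree $2$ with neighbors exactly $a$ and $w$ (i.e., a path on two vertices $a,b$ attached to the rest of the graph by the single edge $bw$). A graph is $P_2$-irreducible if it has no pendant $P_2$. A leaf is a vertex of degree $1$. *)

theory Defs
  imports Main
begin

definition sgraph :: "'a set \<Rightarrow> ('a \<Rightarrow> 'a \<Rightarrow> bool) \<Rightarrow> bool" where
  "sgraph V E \<longleftrightarrow> finite V \<and> (\<forall>x y. E x y \<longrightarrow> x \<in> V \<and> y \<in> V)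
     \<and> (\<forall>x y. E x y \<longrightarrow> E y x) \<and> (\<forall>x. \<not> E x x)"

definition neighbors :: "'a set \<Rightarrow> ('a \<Rightarrow> 'a \<Rightarrow> bool) \<Rightarrow> 'a \<Rightarrow> 'a set" where
  "neighbors V E v = {u \<in> V. E v u}"

definition degree :: "'a set \<Rightarrow> ('a \<Rightarrow> 'a \<Rightarrow> bool) \<Rightarrow> 'a \<Rightarrow> nat" where
  "degree V E v = card (neighbors V E v)"

definition is_path :: "'a set \<Rightarrow> ('a \<Rightarrow> 'a \<Rightarrow> bool) \<Rightarrow> 'a list \<Rightarrow> bool" where
  "is_path V E xs \<longleftrightarrow> xs \<noteq> [] \<and> set xs \<subseteq> V \<and> distinct xs
     \<and> (\<forall>i. Suc i < length xs \<longrightarrow> E (xs ! i) (xs ! Suc i))"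

definition is_cycle :: "'a set \<Rightarrow> ('a \<Rightarrow> 'a \<Rightarrow> bool) \<Rightarrow> 'a list \<Rightarrow> bool" where
  "is_cycle V E xs \<longleftrightarrow> length xs \<ge> 3 \<and> is_path V E xs \<and> E (last xs) (hd xs)"

definition connected_graph :: "'a set \<Rightarrow> ('a \<Rightarrow> 'a \<Rightarrow> bool) \<Rightarrow> bool" where
  "connected_graph V E \<longleftrightarrow>
     (\<forall>u\<in>V. \<forall>v\<in>V. \<exists>xs. is_path V E xs \<and> hd xs = u \<and> last xs = v)"

definition is_tree :: "'a set \<Rightarrow> ('a \<Rightarrow> 'a \<Rightarrow> bool) \<Rightarrow> bool" where
  "is_tree V E \<longleftrightarrow> sgraph V E \<and> V \<noteq> {} \<and> connected_graph V E
     \<and> \<not> (\<exists>xs. is_cycle V E xs)"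

definition leaf :: "'a set \<Rightarrow> ('a \<Rightarrow> 'a \<Rightarrow> bool) \<Rightarrow> 'a \<Rightarrow> bool" where
  "leaf V E v \<longleftrightarrow> v \<in> V \<and> degree V E v = 1"

definition has_pendant_P2 :: "'a set \<Rightarrow> ('a \<Rightarrow> 'a \<Rightarrow> bool) \<Rightarrow> bool" where
  "has_pendant_P2 V E \<longleftrightarrow> (\<exists>a b w. a \<in> V \<and> b \<in> V \<and> w \<in> V
     \<and> a \<noteq> b \<and> a \<noteq> w \<and> b \<noteq> w
     \<and> degree V E a = 1 \<and> E a b \<and> degree V E b = 2 \<and> neighbors V E b = {a, w})"

definition P2_irreducible :: "'a set \<Rightarrow> ('a \<Rightarrow> 'a \<Rightarrow> bool) \<Rightarrow> bool" where
  "P2_irreducible V E \<longleftrightarrow> \<not> has_pendant_P2 V E"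

definition is_K1 :: "'a set \<Rightarrow> ('a \<Rightarrow> 'a \<Rightarrow> bool) \<Rightarrow> bool" where
  "is_K1 V E \<longleftrightarrow> (\<exists>v. V = {v}) \<and> (\<forall>x y. \<not> E x y)"

definition is_P2 :: "'a set \<Rightarrow> ('a \<Rightarrow> 'a \<Rightarrow> bool) \<Rightarrow> bool" where
  "is_P2 V E \<longleftrightarrow> (\<exists>a b. a \<noteq> b \<and> V = {a, b}
     \<and> (\<forall>x y. E x y \<longleftrightarrow> (x = a \<and> y = b) \<or> (x = b \<and> y = a)))"

definition is_star :: "'a set \<Rightarrow> ('a \<Rightarrow> 'a \<Rightarrow> bool) \<Rightarrow> nat \<Rightarrow> bool" where
  "is_star V E n \<longleftrightarrow> finite V \<and> card V = n + 1 \<and> (\<exists>c\<in>V.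
     \<forall>x y. E x y \<longleftrightarrow> x \<in> V \<and> y \<in> V \<and> x \<noteq> y \<and> (x = c \<or> y = c))"

end

theory Submission
  imports Defs
begin

text \<open>Take a longest path \<open>p\<^sub>0 \<dots> p\<^sub>k\<close>. By maximality and acyclicity
  its end \<open>p\<^sub>0\<close> is a leaf, and so is every other neighbour \<open>x \<noteq> p\<^sub>2\<close> of \<open>p\<^sub>1\<close>, since
  \<open>x p\<^sub>1 \<dots> p\<^sub>k\<close> is again a longest path. If \<open>k \<ge> 2\<close>, irreducibility forbids
  \<open>deg p\<^sub>1 = 2\<close>, so \<open>p\<^sub>1\<close> has at least two leaf neighbours, and symmetrically
  \<open>p\<^sub>k\<^sub>-\<^sub>1\<close>. For \<open>k \<ge> 3\<close> these are two distinct vertices; for \<open>k \<le> 2\<close> some vertex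
  has only leaves as neighbours, which makes the connected graph a star.\<close>

definition forest :: "'a set \<Rightarrow> ('a \<Rightarrow> 'a \<Rightarrow> bool) \<Rightarrow> bool" where
  "forest V E \<longleftrightarrow> sgraph V E \<and> (\<nexists>xs. is_cycle V E xs)"

definition longest_path :: "'a set \<Rightarrow> ('a \<Rightarrow> 'a \<Rightarrow> bool) \<Rightarrow> 'a list \<Rightarrow> bool" where
  "longest_path V E P \<longleftrightarrow> is_path V E P \<and> (\<forall>Q. is_path V E Q \<longrightarrow> length Q \<le> length P)"

lemma tree_imp_forest: "is_tree V E \<Longrightarrow> forest V E"
  by (simp add: is_tree_def forest_def)

lemma sgraph_edgeD:
  assumes "sgraph V E" "E x y"
  shows "x \<in> V" "y \<in> V" "E y x" "x \<noteq> y"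
  using assms unfolding sgraph_def by blast+

lemma leafI:
  assumes "sgraph V E" "E x v" "\<And>y. E x y \<Longrightarrow> y = v"
  shows "leaf V E x"
proof -
  have "neighbors V E x = {v}"
    using assms sgraph_edgeD(2)[OF assms(1,2)] unfolding neighbors_def by blast
  then show ?thesis using sgraph_edgeD(1)[OF assms(1,2)] by (simp add: leaf_def degree_def)
qed

lemma leaf_neighbour_unique:
  assumes "sgraph V E" "leaf V E x" "E x a" "E x b"
  shows "a = b"
proof -
  have "a \<in> neighbors V E x" "b \<in> neighbors V E x"
    using assms by (auto simp: neighbors_def dest: sgraph_edgeD)
  moreover have "card (neighbors V E x) = 1" using assms(2) by (simp add: leaf_def degree_def)
  ultimately show ?thesis by (metis card_1_singletonE singletonD)
qed

lemma is_path_length_le_card: "sgraph V E \<Longrightarrow> is_path V E xs \<Longrightarrow> length xs \<le> card V"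
  unfolding is_path_def sgraph_def by (metis card_mono distinct_card)

lemma is_path_Cons:
  "is_path V E xs \<Longrightarrow> x \<in> V \<Longrightarrow> x \<notin> set xs \<Longrightarrow> E x (hd xs) \<Longrightarrow> is_path V E (x # xs)"
  unfolding is_path_def by (auto simp: nth_Cons hd_conv_nth split: nat.splits)

lemma is_path_tl: "is_path V E xs \<Longrightarrow> 2 \<le> length xs \<Longrightarrow> is_path V E (tl xs)"
  unfolding is_path_def by (cases xs) auto

lemma is_path_rev:
  assumes "sgraph V E" "is_path V E xs"
  shows "is_path V E (rev xs)"
  unfolding is_path_def
proof (intro conjI allI impI)
  fix i assume i: "Suc i < length (rev xs)"
  let ?j = "length xs - Suc (Suc i)"
  have "E (xs ! ?j) (xs ! Suc ?j)"
    using assms(2) i unfolding is_path_def by simp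
  moreover have "Suc ?j = length xs - Suc i" using i by simp
  ultimately show "E (rev xs ! i) (rev xs ! Suc i)"
    using assms(1) i by (simp add: rev_nth sgraph_edgeD(3))
qed (use assms(2) in \<open>auto simp: is_path_def\<close>)

lemma longest_path_exists:
  assumes "sgraph V E" "V \<noteq> {}"
  obtains P where "longest_path V E P"
proof -
  obtain v where "v \<in> V" using assms(2) by blast
  then have "is_path V E [v]" by (simp add: is_path_def)
  moreover have "\<forall>Q. is_path V E Q \<longrightarrow> length Q < Suc (card V)"
    using is_path_length_le_card[OF assms(1)] by (simp add: less_Suc_eq_le)
  ultimately obtain P where "is_path V E P" "\<forall>Q. is_path V E Q \<longrightarrow> length Q \<le> length P"
    using Lattices_Big.ex_has_greatest_nat[where f = length] by metis
  then show ?thesis using that by (simp add: longest_path_def)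
qed

lemma longest_path_rev: "sgraph V E \<Longrightarrow> longest_path V E P \<Longrightarrow> longest_path V E (rev P)"
  by (simp add: longest_path_def is_path_rev)

lemma forest_path_hd_adjacent:
  assumes "forest V E" "is_path V E xs" "x \<in> set xs" "E (hd xs) x"
  shows "x = xs ! 1"
proof -
  obtain j where j: "j < length xs" "xs ! j = x" using assms(3) by (metis in_set_conv_nth)
  have hd: "hd xs = xs ! 0" using j(1) by (cases xs) auto
  have "j \<noteq> 0" using assms(1,4) j(2) hd unfolding forest_def sgraph_def by metis
  moreover have "\<not> 2 \<le> j"
  proof
    assume "2 \<le> j"
    \<comment> \<open>the edge closes the initial segment \<open>xs ! 0 \<dots> xs ! j\<close> into a cycle\<close>
    then have "is_cycle V E (take (Suc j) xs)"
      using assms(1,2,4) j hd unfolding is_cycle_def is_path_def forest_def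
      by (auto simp: last_conv_nth hd_conv_nth dest: in_set_takeD sgraph_edgeD(3))
    then show False using assms(1) unfolding forest_def by blast
  qed
  ultimately have "j = 1" by simp
  then show ?thesis using j(2) by simp
qed

lemma longest_path_hd_neighbour:
  assumes "forest V E" "longest_path V E P" "E (hd P) y"
  shows "2 \<le> length P" "y = P ! 1"
proof -
  have G: "sgraph V E" and P: "is_path V E P"
    using assms(1,2) by (auto simp: forest_def longest_path_def)
  have "y \<in> set P"
  proof (rule ccontr)
    assume "y \<notin> set P"
    then have "is_path V E (y # P)"
      using is_path_Cons[OF P] assms(3) G by (auto dest: sgraph_edgeD)
    then show False using assms(2) unfolding longest_path_def by fastforce
  qed
  then show "y = P ! 1" using forest_path_hd_adjacent[OF assms(1) P _ assms(3)] by blast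
  show "2 \<le> length P"
  proof (rule ccontr)
    assume "\<not> 2 \<le> length P"
    then have "P = [hd P]" using P unfolding is_path_def
      by (cases P) (auto simp: Suc_le_eq)
    then show False using \<open>y \<in> set P\<close> assms(3) G by (metis empty_iff empty_set set_ConsD sgraph_edgeD(4))
  qed
qed

lemma longest_path_hd_leaf:
  assumes "forest V E" "longest_path V E P" "2 \<le> length P"
  shows "leaf V E (hd P)"
proof -
  have "is_path V E P" using assms(2) by (simp add: longest_path_def)
  then have "E (P ! 0) (P ! 1)"
    using assms(3) unfolding is_path_def by (auto dest: spec[of _ 0])
  then have "E (hd P) (P ! 1)" using assms(3) by (cases P) auto
  then show ?thesis
    using assms longest_path_hd_neighbour(2) leafI unfolding forest_def by metis
qed

lemma longest_path_second_neighbour_leaf: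
  assumes F: "forest V E" and P: "longest_path V E P" and "2 \<le> length P"
    and x: "E (P ! 1) x" "x \<noteq> P ! 2"
  shows "leaf V E x"
proof -
  have G: "sgraph V E" using F by (simp add: forest_def)
  have tl: "is_path V E (tl P)"
    using P \<open>2 \<le> length P\<close> is_path_tl by (auto simp: longest_path_def)
  have hd_tl: "hd (tl P) = P ! 1"
    using \<open>2 \<le> length P\<close> by (cases P; cases "tl P") auto
  have "x \<notin> set (tl P)"
  proof
    assume "x \<in> set (tl P)"
    then have "x = tl P ! 1" using forest_path_hd_adjacent[OF F tl] x(1) hd_tl by simp
    then show False using x(2) \<open>2 \<le> length P\<close> by (cases P) auto
  qed
  \<comment> \<open>replacing the first vertex by \<open>x\<close> gives another longest path\<close>
  then have "longest_path V E (x # tl P)"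
    using P is_path_Cons[OF tl] x(1) hd_tl \<open>2 \<le> length P\<close>
    by (auto simp: longest_path_def dest: sgraph_edgeD[OF G])
  then show ?thesis
    using longest_path_hd_neighbour(2)[OF F] leafI[OF G] x(1) G \<open>2 \<le> length P\<close>
    by (metis list.sel(1) sgraph_edgeD(3))
qed

lemma longest_path_second_degree:
  assumes F: "forest V E" and irreducible: "P2_irreducible V E"
    and P: "longest_path V E P" and "3 \<le> length P"
  shows "3 \<le> degree V E (P ! 1)"
proof -
  have G: "sgraph V E" using F by (simp add: forest_def)
  have "is_path V E P" using P by (simp add: longest_path_def)
  then have e01: "E (P ! 0) (P ! 1)" and e12: "E (P ! 1) (P ! 2)" and d02: "P ! 0 \<noteq> P ! 2"
    using \<open>3 \<le> length P\<close> unfolding is_path_def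
    by (auto simp: numeral_2_eq_2 nth_eq_iff_index_eq dest: spec[of _ 0] spec[of _ 1])
  let ?N = "neighbors V E (P ! 1)"
  have fin: "finite ?N" using G by (simp add: sgraph_def neighbors_def)
  have sub: "{P ! 0, P ! 2} \<subseteq> ?N"
    using e01 e12 G by (auto simp: neighbors_def dest: sgraph_edgeD)
  have "?N \<noteq> {P ! 0, P ! 2}"
  proof
    assume N: "?N = {P ! 0, P ! 2}"
    have "leaf V E (P ! 0)"
      using longest_path_hd_leaf[OF F P] \<open>3 \<le> length P\<close> by (cases P) auto
    then have "has_pendant_P2 V E"
      unfolding has_pendant_P2_def leaf_def degree_def
      using N d02 e01 e12 sgraph_edgeD[OF G e01] sgraph_edgeD[OF G e12]
      by (intro exI[of _ "P ! 0"] exI[of _ "P ! 1"] exI[of _ "P ! 2"]) auto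
    then show False using irreducible by (simp add: P2_irreducible_def)
  qed
  then have "{P ! 0, P ! 2} \<subset> ?N" using sub by blast
  then have "card {P ! 0, P ! 2} < card ?N" by (rule psubset_card_mono[OF fin])
  then show ?thesis using d02 by (simp add: degree_def)
qed

lemma longest_path_second_leaf_neighbours:
  assumes F: "forest V E" and irreducible: "P2_irreducible V E"
    and P: "longest_path V E P" and "3 \<le> length P"
  shows "2 \<le> card {l. leaf V E l \<and> E (P ! 1) l}"
proof -
  let ?N = "neighbors V E (P ! 1)"
  have "3 \<le> card ?N"
    using longest_path_second_degree[OF assms] by (simp add: degree_def)
  moreover have "card ?N - card {P ! 2} \<le> card (?N - {P ! 2})"
    by (rule diff_card_le_card_Diff) simp
  ultimately have "2 \<le> card (?N - {P ! 2})" by simp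
  also have "\<dots> \<le> card {l. leaf V E l \<and> E (P ! 1) l}"
  proof (rule card_mono)
    show "finite {l. leaf V E l \<and> E (P ! 1) l}"
      using F by (auto simp: forest_def sgraph_def leaf_def)
    show "?N - {P ! 2} \<subseteq> {l. leaf V E l \<and> E (P ! 1) l}"
      using longest_path_second_neighbour_leaf[OF F P] \<open>3 \<le> length P\<close>
      by (auto simp: neighbors_def)
  qed
  finally show ?thesis .
qed

lemma connected_adjacent_centre:
  assumes G: "sgraph V E" and conn: "connected_graph V E" and c: "c \<in> V"
    and leaves: "\<And>x. E c x \<Longrightarrow> leaf V E x" and u: "u \<in> V"
  shows "u = c \<or> E c u"
proof -
  obtain Q where Q: "is_path V E Q" "hd Q = c" "last Q = u"
    using conn c u unfolding connected_graph_def by blast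
  then obtain rest where Q_eq: "Q = c # rest" by (cases Q) (auto simp: is_path_def)
  show ?thesis
  proof (cases rest)
    case Nil
    then show ?thesis using Q(3) Q_eq by simp
  next
    case (Cons q1 rest')
    have e1: "E c q1" using Q(1) unfolding Q_eq Cons is_path_def by (auto dest: spec[of _ 0])
    show ?thesis
    proof (cases rest')
      case Nil
      then show ?thesis using Q(3) Q_eq Cons e1 by simp
    next
      case (Cons q2 rest'')
      have "E q1 q2" and "q2 \<noteq> c"
        using Q(1) unfolding Q_eq \<open>rest = q1 # rest'\<close> Cons is_path_def
        by (auto dest: spec[of _ 1])
      then show ?thesis
        using leaf_neighbour_unique[OF G leaves[OF e1]] sgraph_edgeD(3)[OF G e1] by blast
    qed
  qed
qed

lemma connected_star_if_neighbours_leaves: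
  assumes G: "sgraph V E" and conn: "connected_graph V E" and c: "c \<in> V"
    and leaves: "\<And>x. E c x \<Longrightarrow> leaf V E x"
  shows "is_star V E (degree V E c)"
proof -
  note adj = connected_adjacent_centre[OF assms]
  have fin: "finite V" using G by (simp add: sgraph_def)
  have "V = insert c (neighbors V E c)" using adj c by (auto simp: neighbors_def)
  moreover have "c \<notin> neighbors V E c" using G by (simp add: neighbors_def sgraph_def)
  ultimately have "card V = degree V E c + 1"
    using fin by (metis Suc_eq_plus1 card_insert_disjoint degree_def finite_insert)
  moreover have "E x y \<longleftrightarrow> x \<in> V \<and> y \<in> V \<and> x \<noteq> y \<and> (x = c \<or> y = c)" for x y
  proof
    assume e: "E x y"
    have "x = c \<or> y = c"
    proof (rule ccontr)
      assume "\<not> (x = c \<or> y = c)"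
      then have "E c x" using adj sgraph_edgeD(1)[OF G e] by blast
      then show False
        using leaf_neighbour_unique[OF G leaves] sgraph_edgeD(3)[OF G] e \<open>\<not> (x = c \<or> y = c)\<close>
        by metis
    qed
    then show "x \<in> V \<and> y \<in> V \<and> x \<noteq> y \<and> (x = c \<or> y = c)" using sgraph_edgeD[OF G e] by blast
  next
    assume "x \<in> V \<and> y \<in> V \<and> x \<noteq> y \<and> (x = c \<or> y = c)"
    then show "E x y" using adj G by (auto dest: sgraph_edgeD(3))
  qed
  ultimately show ?thesis unfolding is_star_def using fin c by blast
qed

lemma is_star_0_imp_is_K1: "is_star V E 0 \<Longrightarrow> is_K1 V E"
  unfolding is_star_def is_K1_def by (metis card_1_singletonE empty_iff insert_iff add_0)

lemma is_star_1_imp_is_P2: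
  assumes "is_star V E 1"
  shows "is_P2 V E"
proof -
  obtain c where "card V = 2" "c \<in> V"
    and E: "\<And>x y. E x y \<longleftrightarrow> x \<in> V \<and> y \<in> V \<and> x \<noteq> y \<and> (x = c \<or> y = c)"
    using assms unfolding is_star_def by auto
  then obtain d where "V = {c, d}" "c \<noteq> d"
    unfolding card_2_iff by blast
  then show ?thesis unfolding is_P2_def E by blast
qed

lemma longest_path_length_1_imp_is_K1:
  assumes F: "forest V E" and conn: "connected_graph V E"
    and P: "longest_path V E P" and "length P = 1"
  shows "is_K1 V E"
proof -
  have G: "sgraph V E" using F by (simp add: forest_def)
  have hd_V: "hd P \<in> V" using P by (auto simp: longest_path_def is_path_def)
  have "\<not> E (hd P) y" for y
    using longest_path_hd_neighbour(1)[OF F P] \<open>length P = 1\<close> by auto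
  then have "is_star V E 0"
    using connected_star_if_neighbours_leaves[OF G conn hd_V]
    by (simp add: degree_def neighbors_def)
  then show ?thesis by (rule is_star_0_imp_is_K1)
qed

lemma longest_path_length_2_imp_is_P2:
  assumes F: "forest V E" and conn: "connected_graph V E"
    and P: "longest_path V E P" and "length P = 2"
  shows "is_P2 V E"
proof -
  have G: "sgraph V E" using F by (simp add: forest_def)
  have hd_V: "hd P \<in> V" using P by (auto simp: longest_path_def is_path_def)
  have "leaf V E (P ! 1)"
    using longest_path_hd_leaf[OF F longest_path_rev[OF G P]] \<open>length P = 2\<close>
    by (auto simp: hd_rev last_conv_nth simp flip: length_greater_0_conv)
  then have "is_star V E (degree V E (hd P))"
    using connected_star_if_neighbours_leaves[OF G conn hd_V]
      longest_path_hd_neighbour(2)[OF F P] by blast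
  moreover have "degree V E (hd P) = 1"
    using longest_path_hd_leaf[OF F P] \<open>length P = 2\<close> by (simp add: leaf_def)
  ultimately show ?thesis using is_star_1_imp_is_P2 by simp
qed

lemma longest_path_length_3_imp_is_star:
  assumes F: "forest V E" and conn: "connected_graph V E" and irreducible: "P2_irreducible V E"
    and P: "longest_path V E P" and "length P = 3"
  shows "\<exists>n\<ge>3. is_star V E n"
proof -
  have G: "sgraph V E" using F by (simp add: forest_def)
  have R: "longest_path V E (rev P)" by (rule longest_path_rev[OF G P])
  have path: "is_path V E P" using P by (simp add: longest_path_def)
  \<comment> \<open>a neighbour of the centre is a leaf unless it is \<open>P ! 2\<close>, or, reading \<open>P\<close> backwards, \<open>P ! 0\<close>\<close>
  have rev: "rev P ! 1 = P ! 1" "rev P ! 2 = P ! 0" and "P ! 0 \<noteq> P ! 2"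
    using \<open>length P = 3\<close> path by (auto simp: rev_nth is_path_def nth_eq_iff_index_eq)
  have "leaf V E x" if x: "E (P ! 1) x" for x
  proof (cases "x = P ! 2")
    case False
    then show ?thesis using longest_path_second_neighbour_leaf[OF F P _ x] \<open>length P = 3\<close> by simp
  next
    case True
    then show ?thesis
      using longest_path_second_neighbour_leaf[OF F R, of x] x \<open>length P = 3\<close> rev
        \<open>P ! 0 \<noteq> P ! 2\<close> by simp
  qed
  moreover have "P ! 1 \<in> V" using path \<open>length P = 3\<close> by (auto simp: is_path_def)
  ultimately have "is_star V E (degree V E (P ! 1))"
    using connected_star_if_neighbours_leaves[OF G conn] by blast
  then show ?thesis
    using longest_path_second_degree[OF F irreducible P] \<open>length P = 3\<close> by auto
qed

lemma longest_path_length_ge_4_imp_two_leafy_vertices: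
  assumes F: "forest V E" and irreducible: "P2_irreducible V E"
    and P: "longest_path V E P" and "4 \<le> length P"
  shows "\<exists>u\<in>V. \<exists>v\<in>V. u \<noteq> v
    \<and> card {l. leaf V E l \<and> E u l} \<ge> 2 \<and> card {l. leaf V E l \<and> E v l} \<ge> 2"
proof -
  have G: "sgraph V E" using F by (simp add: forest_def)
  have path: "is_path V E P" using P by (simp add: longest_path_def)
  have "rev P ! 1 = P ! (length P - 2)" and "P ! 1 \<noteq> P ! (length P - 2)"
    and "P ! 1 \<in> V" and "P ! (length P - 2) \<in> V"
    using \<open>4 \<le> length P\<close> path
    by (auto simp: rev_nth numeral_2_eq_2 is_path_def nth_eq_iff_index_eq)
  then show ?thesis
    using longest_path_second_leaf_neighbours[OF F irreducible P]
      longest_path_second_leaf_neighbours[OF F irreducible longest_path_rev[OF G P]]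
      \<open>4 \<le> length P\<close> by fastforce
qed

theorem lemma1:
  fixes V :: "'a set" and E :: "'a \<Rightarrow> 'a \<Rightarrow> bool"
  assumes "is_tree V E" and "P2_irreducible V E"
  shows "is_K1 V E \<or> is_P2 V E \<or> (\<exists>n\<ge>3. is_star V E n)
    \<or> (\<exists>u\<in>V. \<exists>v\<in>V. u \<noteq> v
         \<and> card {l. leaf V E l \<and> E u l} \<ge> 2 \<and> card {l. leaf V E l \<and> E v l} \<ge> 2)"
proof -
  have F: "forest V E" using assms(1) by (rule tree_imp_forest)
  have G: "sgraph V E" and conn: "connected_graph V E"
    using assms(1) by (auto simp: is_tree_def)
  obtain P where P: "longest_path V E P"
    using longest_path_exists G assms(1) unfolding is_tree_def by blast
  then have "P \<noteq> []" by (simp add: longest_path_def is_path_def)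
  then consider "length P = 1" | "length P = 2" | "length P = 3" | "4 \<le> length P"
    by (cases "length P") (auto, linarith)
  then show ?thesis
  proof cases
    case 1
    then show ?thesis using longest_path_length_1_imp_is_K1[OF F conn P] by simp
  next
    case 2
    then show ?thesis using longest_path_length_2_imp_is_P2[OF F conn P] by simp
  next
    case 3
    then show ?thesis using longest_path_length_3_imp_is_star[OF F conn assms(2) P] by simp
  next
    case 4
    then show ?thesis
      using longest_path_length_ge_4_imp_two_leafy_vertices[OF F assms(2) P] by simp
  qed
qed

end
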